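(* Let $d\in\mathbb{D}$ be such that, for every formula $\varphi$ of Hennessy–Milner logic, $(\mathbb{D},d)\models^c\varphi$ implies $(\mathbb{D},d)\models^a\varphi$. Then $d\in\max(\mathbb{D})$.
   Context: Fix a finite set $\mathrm{Act}$ of events. For a dcpo $D$, $K(D)$ denotes its compact elements; a bifinite (SFP) domain is an algebraic dcpo in which for each finite $F\subseteq K(D)$ iterated minimal-upper-bound sets are finite and in $K(D)$ and every upper bound of $F$ is above a minimal upper bound. Scott topology: sets $U={\uparrow}(U\cap K(D))$; Lawson topology generated by ${\uparrow}k\setminus{\uparrow}l$, $k,l\in K(D)$. Mixed powerdomain $\mathcal{M}(D)$: pairs $(L,U)$, $L$ Scott-closed, $U$ Lawson-closed upper, $L={\downarrow}(L\cap U)$, ordered by $L\subseteq L'$ and $U'\subseteq U$. $\mathbb{D}$ is the initial solution over bifinite domains of $\mathbb{D}\cong\prod_{\alpha\in\mathrm{Act}}\mathcal{M}(\mathbb{D})$, $d=((L^d_\alpha,U^d_\alpha))_\alpha$, viewed as a mixed transition system $(\mathbb{D},\mathbb{R}^a,\mathbb{R}^c)$ with $(d,\alpha,d')\in\mathbb{R}^a$ iff $d'\in L^d_\alpha$ and $(d,\alpha,d')\in\mathbb{R}^c$ iff $d'\in U^d_\alpha$. $\max(\mathbb{D})$ is the set of maximal elements. Hennessy–Milner logic: $\varphi::=tt\mid\neg\varphi\mid\langle\alpha\rangle\varphi\mid\varphi\wedge\varphi$. For $m\in\{a,c\}$ ($\neg a=c$, $\neg c=a$): $(\mathbb{D},d)\models^m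 tt$; $(\mathbb{D},d)\models^m\neg\varphi$ iff not $(\mathbb{D},d)\models^{\neg m}\varphi$; $(\mathbb{D},d)\models^m\langle\alpha\rangle\varphi$ iff $(\mathbb{D},d')\models^m\varphi$ for some $(d,\alpha,d')\in\mathbb{R}^m$; $\models^m\varphi\wedge\psi$ iff $\models^m\varphi$ and $\models^m\psi$. *)

theory Defs
  imports Complex_Main "HOL-Library.FuncSet"
begin

definition up :: "'d::order set \<Rightarrow> 'd set" where
  "up A = {x. \<exists>a\<in>A. a \<le> x}"

definition down :: "'d::order set \<Rightarrow> 'd set" where
  "down A = {x. \<exists>a\<in>A. x \<le> a}"

definition is_lub :: "'d::order set \<Rightarrow> 'd \<Rightarrow> bool" where
  "is_lub A s \<longleftrightarrow> (\<forall>x\<in>A. x \<le> s) \<and> (\<forall>u. (\<forall>x\<in>A. x \<le> u) \<longrightarrow> s \<le> u)"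

definition directed :: "'d::order set \<Rightarrow> bool" where
  "directed A \<longleftrightarrow> A \<noteq> {} \<and> (\<forall>x\<in>A. \<forall>y\<in>A. \<exists>z\<in>A. x \<le> z \<and> y \<le> z)"

definition dcpo :: "'d::order itself \<Rightarrow> bool" where
  "dcpo _ \<longleftrightarrow> (\<forall>A::'d set. directed A \<longrightarrow> (\<exists>s. is_lub A s))"

definition compact :: "'d::order \<Rightarrow> bool" where
  "compact k \<longleftrightarrow> (\<forall>A s. directed A \<and> is_lub A s \<and> k \<le> s \<longrightarrow> (\<exists>a\<in>A. k \<le> a))"

definition KD :: "'d::order set" where
  "KD = {k. compact k}"

definition algebraic :: "'d::order itself \<Rightarrow> bool" where
  "algebraic T \<longleftrightarrow> dcpo T \<and>
     (\<forall>x::'d. directed {k\<in>KD. k \<le> x} \<and> is_lub {k\<in>KD. k \<le> x} x)"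

definition is_ub :: "'d::order set \<Rightarrow> 'd \<Rightarrow> bool" where
  "is_ub F x \<longleftrightarrow> (\<forall>y\<in>F. y \<le> x)"

definition mub :: "'d::order set \<Rightarrow> 'd set" where
  "mub F = {x. is_ub F x \<and> (\<forall>y. is_ub F y \<and> y \<le> x \<longrightarrow> y = x)}"

definition mubstep :: "'d::order set \<Rightarrow> 'd set" where
  "mubstep F = \<Union>{mub G | G. G \<subseteq> F}"

definition mubclosure :: "'d::order set \<Rightarrow> 'd set" where
  "mubclosure F = (\<Union>n. (mubstep ^^ n) F)"

definition bifinite :: "'d::order itself \<Rightarrow> bool" where
  "bifinite T \<longleftrightarrow> algebraic T \<and>
     (\<forall>F::'d set. finite F \<and> F \<subseteq> KD \<longrightarrow>
        finite (mubclosure F) \<and> mubclosure F \<subseteq> KD \<and>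
        (\<forall>x. is_ub F x \<longrightarrow> (\<exists>m\<in>mub F. m \<le> x)))"

definition scott_open :: "'d::order set \<Rightarrow> bool" where
  "scott_open U \<longleftrightarrow> U = up (U \<inter> KD)"

definition scott_closed :: "'d::order set \<Rightarrow> bool" where
  "scott_closed L \<longleftrightarrow> scott_open (- L)"

definition scott_closure :: "'d::order set \<Rightarrow> 'd set" where
  "scott_closure A = \<Inter>{C. scott_closed C \<and> A \<subseteq> C}"

definition lawson_subbasis :: "'d::order set set" where
  "lawson_subbasis = {up {k} - up {l} | k l. k \<in> KD \<and> l \<in> KD}"

definition lawson_closed :: "'d::order set \<Rightarrow> bool" where
  "lawson_closed C \<longleftrightarrow> generate_topology lawson_subbasis (- C)"

definition upper :: "'d::order set \<Rightarrow> bool" where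
  "upper U \<longleftrightarrow> up U = U"

definition mixed_pd :: "('d::order set \<times> 'd set) set" where
  "mixed_pd = {(L, U). scott_closed L \<and> lawson_closed U \<and> upper U \<and> L = down (L \<inter> U)}"

definition mixed_le :: "('d::order set \<times> 'd set) \<Rightarrow> ('d set \<times> 'd set) \<Rightarrow> bool" where
  "mixed_le p q \<longleftrightarrow> fst p \<subseteq> fst q \<and> snd q \<subseteq> snd p"

definition prod_pd :: "'a set \<Rightarrow> ('a \<Rightarrow> 'd::order set \<times> 'd set) set" where
  "prod_pd Act = (\<Pi>\<^sub>E \<alpha>\<in>Act. mixed_pd)"

definition prod_le :: "'a set \<Rightarrow> ('a \<Rightarrow> 'd::order set \<times> 'd set) \<Rightarrow> ('a \<Rightarrow> 'd set \<times> 'd set) \<Rightarrow> bool" where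
  "prod_le Act p q \<longleftrightarrow> (\<forall>\<alpha>\<in>Act. mixed_le (p \<alpha>) (q \<alpha>))"

definition mixed_map :: "('d::order \<Rightarrow> 'd) \<Rightarrow> ('d set \<times> 'd set) \<Rightarrow> ('d set \<times> 'd set)" where
  "mixed_map f p = (scott_closure (f ` fst p), up (f ` snd p))"

definition prod_map :: "'a set \<Rightarrow> ('d::order \<Rightarrow> 'd) \<Rightarrow> ('a \<Rightarrow> 'd set \<times> 'd set) \<Rightarrow> ('a \<Rightarrow> 'd set \<times> 'd set)" where
  "prod_map Act f p = (\<lambda>\<alpha>\<in>Act. mixed_map f (p \<alpha>))"

definition is_solution :: "'a set \<Rightarrow> ('d::order \<Rightarrow> ('a \<Rightarrow> 'd set \<times> 'd set)) \<Rightarrow> bool" where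
  "is_solution Act i \<longleftrightarrow> bij_betw i UNIV (prod_pd Act) \<and>
     (\<forall>x y. x \<le> y \<longleftrightarrow> prod_le Act (i x) (i y))"

definition dbot :: "'d::order" where
  "dbot = (THE b. \<forall>x. b \<le> x)"

primrec approx :: "'a set \<Rightarrow> ('d::order \<Rightarrow> ('a \<Rightarrow> 'd set \<times> 'd set)) \<Rightarrow> nat \<Rightarrow> 'd \<Rightarrow> 'd" where
  "approx Act i 0 = (\<lambda>_. dbot)"
| "approx Act i (Suc n) = (\<lambda>x. inv i (prod_map Act (approx Act i n) (i x)))"

text \<open>initial solution (characterised by minimal invariance: id = lub of the approximations)\<close>
definition is_initial_solution :: "'a set \<Rightarrow> ('d::order \<Rightarrow> ('a \<Rightarrow> 'd set \<times> 'd set)) \<Rightarrow> bool" where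
  "is_initial_solution Act i \<longleftrightarrow> finite Act \<and> bifinite TYPE('d) \<and> is_solution Act i \<and>
     (\<forall>x. is_lub (range (\<lambda>n. approx Act i n x)) x)"

datatype (acts: 'a) hml = TT | Neg "'a hml" | Dia 'a "'a hml" | Conj "'a hml" "'a hml"

datatype mode = May | Must  \<comment> \<open>May = a (admissible), Must = c (compulsory)\<close>

fun dual :: "mode \<Rightarrow> mode" where
  "dual May = Must" | "dual Must = May"

definition trans :: "('d \<Rightarrow> ('a \<Rightarrow> 'd set \<times> 'd set)) \<Rightarrow> mode \<Rightarrow> 'd \<Rightarrow> 'a \<Rightarrow> 'd \<Rightarrow> bool" where
  "trans i m d \<alpha> d' \<longleftrightarrow> (case m of May \<Rightarrow> d' \<in> fst (i d \<alpha>) | Must \<Rightarrow> d' \<in> snd (i d \<alpha>))"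

fun sat :: "('d \<Rightarrow> ('a \<Rightarrow> 'd set \<times> 'd set)) \<Rightarrow> mode \<Rightarrow> 'd \<Rightarrow> 'a hml \<Rightarrow> bool" where
  "sat i m d TT = True"
| "sat i m d (Neg \<phi>) = (\<not> sat i (dual m) d \<phi>)"
| "sat i m d (Dia \<alpha> \<phi>) = (\<exists>d'. trans i m d \<alpha> d' \<and> sat i m d' \<phi>)"
| "sat i m d (Conj \<phi> \<psi>) = (sat i m d \<phi> \<and> sat i m d \<psi>)"

definition maximal :: "'d::order \<Rightarrow> bool" where
  "maximal d \<longleftrightarrow> (\<forall>y. d \<le> y \<longrightarrow> y = d)"

end

theory Submission
  imports Defs
begin

(* Admissible satisfaction is upward closed and compulsory satisfaction downward closed in the
   order of D, and admissible truth implies compulsory truth.  So if d <= y, every formula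
   admissibly true at y is compulsorily true at y, hence compulsorily true at d, hence (by the
   hypothesis) admissibly true at d.  On the other hand each approximation pi_n(y) has a
   characteristic formula, whose admissible models are exactly the elements above pi_n(y); it is
   built by induction on n from the finitely many characteristic formulas of the values of
   pi_(n-1), using that Act is finite.  Thus pi_n(y) <= d for all n, and y = lub pi_n(y) <= d. *)

fun conj_list :: "'a hml list \<Rightarrow> 'a hml" where
  "conj_list [] = TT"
| "conj_list (\<phi> # \<phi>s) = Conj \<phi> (conj_list \<phi>s)"

lemma sat_conj_list: "sat i m x (conj_list \<phi>s) \<longleftrightarrow> (\<forall>\<phi>\<in>set \<phi>s. sat i m x \<phi>)"
  by (induction \<phi>s) auto

lemma acts_conj_list: "acts (conj_list \<phi>s) = (\<Union>\<phi>\<in>set \<phi>s. acts \<phi>)"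
  by (induction \<phi>s) auto

definition Big_Conj :: "'a hml set \<Rightarrow> 'a hml" where
  "Big_Conj \<Phi> = conj_list (SOME \<phi>s. set \<phi>s = \<Phi>)"

lemma set_some_list: "finite \<Phi> \<Longrightarrow> set (SOME \<phi>s. set \<phi>s = \<Phi>) = \<Phi>"
  by (rule someI_ex) (rule finite_list)

lemma sat_Big_Conj: "finite \<Phi> \<Longrightarrow> sat i m x (Big_Conj \<Phi>) \<longleftrightarrow> (\<forall>\<phi>\<in>\<Phi>. sat i m x \<phi>)"
  unfolding Big_Conj_def by (simp add: sat_conj_list set_some_list)

lemma acts_Big_Conj: "finite \<Phi> \<Longrightarrow> acts (Big_Conj \<Phi>) = (\<Union>\<phi>\<in>\<Phi>. acts \<phi>)"
  unfolding Big_Conj_def by (simp add: acts_conj_list set_some_list)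

lemma up_up: "up (up X) = up X"
  unfolding up_def by (blast intro: order.trans)

lemma scott_closed_down_closed:
  assumes "scott_closed C" "y \<in> C" "x \<le> y"
  shows "x \<in> C"
proof (rule ccontr)
  assume "x \<notin> C"
  have open_compl: "- C = up (- C \<inter> KD)"
    using assms(1) unfolding scott_closed_def scott_open_def .
  with \<open>x \<notin> C\<close> obtain k where "k \<in> - C \<inter> KD" "k \<le> x"
    unfolding up_def by auto
  with assms(3) have "y \<in> up (- C \<inter> KD)"
    unfolding up_def by (blast intro: order.trans)
  with open_compl assms(2) show False by blast
qed

lemma scott_closure_subset_iff: "scott_closed C \<Longrightarrow> scott_closure A \<subseteq> C \<longleftrightarrow> A \<subseteq> C"
  unfolding scott_closure_def by blast

lemma dbot_eqI:
  assumes "\<forall>x. b \<le> x"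
  shows "dbot = b"
  unfolding dbot_def using assms by (blast intro: the_equality order.antisym)

lemma least_in_KD: "\<forall>x. b \<le> x \<Longrightarrow> b \<in> KD"
  unfolding KD_def compact_def directed_def by blast

lemma algebraicD:
  "algebraic TYPE('d::order) \<Longrightarrow> directed {k\<in>KD. k \<le> x} \<and> is_lub {k\<in>KD. k \<le> (x::'d)} x"
  unfolding algebraic_def by blast

lemma algebraic_compact_below_not_le:
  assumes "algebraic TYPE('d::order)" and "\<not> x \<le> (y::'d)"
  shows "\<exists>k\<in>KD. k \<le> x \<and> \<not> k \<le> y"
  using algebraicD[OF assms(1), of x] assms(2) unfolding is_lub_def by blast

lemma algebraic_compact_ub_below:
  assumes "algebraic TYPE('d::order)" and "finite F" and "F \<subseteq> {k\<in>KD. k \<le> (y::'d)}"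
  shows "\<exists>k\<in>KD. k \<le> y \<and> (\<forall>f\<in>F. f \<le> k)"
  using assms(2,3)
proof (induction F rule: finite_induct)
  case empty
  then show ?case using algebraicD[OF assms(1), of y] unfolding directed_def by auto
next
  case (insert a F)
  then obtain k where k: "k \<in> {k\<in>KD. k \<le> y}" "\<forall>f\<in>F. f \<le> k" by auto
  have "directed {k\<in>KD. k \<le> y}" using algebraicD[OF assms(1)] by blast
  moreover have "a \<in> {k\<in>KD. k \<le> y}" using insert.prems by blast
  ultimately obtain z where "z \<in> {k\<in>KD. k \<le> y}" "a \<le> z" "k \<le> z"
    using k(1) unfolding directed_def by blast
  with k(2) show ?case by (blast intro: order.trans)
qed

lemma algebraic_scott_closed_down_finite:
  assumes alg: "algebraic TYPE('d::order)" and "finite (A::'d set)"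
  shows "scott_closed (down A)"
  unfolding scott_closed_def scott_open_def
proof
  show "- down A \<subseteq> up (- down A \<inter> KD)"
  proof
    fix y assume "y \<in> - down A"
    then have "\<forall>a\<in>A. \<exists>k\<in>KD. k \<le> y \<and> \<not> k \<le> a"
      using algebraic_compact_below_not_le[OF alg] unfolding down_def by auto
    then obtain g where g: "\<forall>a\<in>A. g a \<in> KD \<and> g a \<le> y \<and> \<not> g a \<le> a" by metis
    then obtain k where k: "k \<in> KD" "k \<le> y" "\<forall>a\<in>A. g a \<le> k"
      using algebraic_compact_ub_below[OF alg, of "g ` A" y] \<open>finite A\<close> by auto
    have "k \<notin> down A"
      using g k(3) unfolding down_def by (blast intro: order.trans)
    with k show "y \<in> up (- down A \<inter> KD)" unfolding up_def by auto
  qed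
  show "up (- down A \<inter> KD) \<subseteq> - down A"
    unfolding up_def down_def by (blast intro: order.trans)
qed

lemma algebraic_scott_closure_finite:
  assumes "algebraic TYPE('d::order)" and "finite (A::'d set)"
  shows "scott_closure A = down A"
proof
  show "scott_closure A \<subseteq> down A"
    using algebraic_scott_closed_down_finite[OF assms]
    by (auto simp: scott_closure_subset_iff down_def)
  show "down A \<subseteq> scott_closure A"
    unfolding scott_closure_def down_def by (blast intro: scott_closed_down_closed)
qed

text \<open>The complement of \<open>up {x}\<close> is the union of the Lawson subbasic sets
  \<open>up {b} - up {k}\<close> over the compact \<open>k \<le> x\<close>, where the least element \<open>b\<close> is compact.\<close>

lemma algebraic_lawson_closed_up_finite:
  assumes alg: "algebraic TYPE('d::order)" and least: "\<forall>x. b \<le> (x::'d)" and "finite (F::'d set)"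
  shows "lawson_closed (up F)"
  unfolding lawson_closed_def using \<open>finite F\<close>
proof (induction F rule: finite_induct)
  case empty
  then show ?case by (simp add: up_def generate_topology.UNIV)
next
  case (insert x F)
  have compl: "- up {x} = (\<Union>k\<in>{k\<in>KD. k \<le> x}. up {b} - up {k})"
    using least unfolding up_def
    by (auto intro: order.trans dest: algebraic_compact_below_not_le[OF alg, of x])
  have "up {b} - up {k} \<in> lawson_subbasis" if "k \<in> KD" for k
    using that least_in_KD[OF least] unfolding lawson_subbasis_def by blast
  then have "generate_topology lawson_subbasis (- up {x})"
    unfolding compl by (intro generate_topology.UN) (auto intro: generate_topology.Basis)
  moreover have "- up (insert x F) = - up {x} \<inter> - up F" unfolding up_def by auto
  ultimately show ?case using insert.IH by (simp add: generate_topology.Int)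
qed

lemma mixed_pd_scott_closed: "p \<in> mixed_pd \<Longrightarrow> scott_closed (fst p)"
  unfolding mixed_pd_def by auto

lemma mixed_pd_lower_eq: "p \<in> mixed_pd \<Longrightarrow> fst p = down (fst p \<inter> snd p)"
  unfolding mixed_pd_def by auto

lemma algebraic_mixed_map_in_mixed_pd:
  fixes f :: "'d::order \<Rightarrow> 'd"
  assumes alg: "algebraic TYPE('d)" and least: "\<forall>x. b \<le> (x::'d)"
    and "mono f" "finite (range f)" "p \<in> mixed_pd"
  shows "mixed_map f p \<in> mixed_pd"
proof -
  obtain L U where p: "p = (L, U)" by fastforce
  have fin: "finite (f ` L)" "finite (f ` U)"
    using \<open>finite (range f)\<close> by (auto intro: finite_subset)
  have L: "L = down (L \<inter> U)" using mixed_pd_lower_eq[OF \<open>p \<in> mixed_pd\<close>] p by simp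
  have "down (f ` L) = down (down (f ` L) \<inter> up (f ` U))"
  proof
    show "down (f ` L) \<subseteq> down (down (f ` L) \<inter> up (f ` U))"
    proof
      fix y assume "y \<in> down (f ` L)"
      then obtain x where "x \<in> L" "y \<le> f x" unfolding down_def by auto
      then obtain z where "z \<in> L" "z \<in> U" "x \<le> z" using L unfolding down_def by blast
      with \<open>y \<le> f x\<close> \<open>mono f\<close> have "y \<le> f z" by (metis monoD order.trans)
      with \<open>z \<in> L\<close> \<open>z \<in> U\<close> show "y \<in> down (down (f ` L) \<inter> up (f ` U))"
        unfolding down_def up_def by blast
    qed
    show "down (down (f ` L) \<inter> up (f ` U)) \<subseteq> down (f ` L)"
      unfolding down_def by (blast intro: order.trans)
  qed
  then show ?thesis
    unfolding p mixed_map_def mixed_pd_def upper_def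
    using algebraic_scott_closure_finite[OF alg fin(1)] up_up
      algebraic_scott_closed_down_finite[OF alg fin(1)]
      algebraic_lawson_closed_up_finite[OF alg least fin(2)]
    by simp
qed

lemma finite_range_mixed_map:
  assumes "finite (range f)"
  shows "finite (range (mixed_map f))"
proof -
  have "range (mixed_map f) \<subseteq> (\<lambda>(A, B). (scott_closure A, up B)) ` (Pow (range f) \<times> Pow (range f))"
    unfolding mixed_map_def by auto
  then show ?thesis using assms by (meson finite_Pow_iff finite_SigmaI finite_imageI finite_subset)
qed

lemma finite_range_prod_map:
  assumes "finite Act" "finite (range f)"
  shows "finite (range (prod_map Act f))"
proof -
  have "range (prod_map Act f) \<subseteq> (\<Pi>\<^sub>E \<alpha>\<in>Act. range (mixed_map f))"
    unfolding prod_map_def by auto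
  then show ?thesis
    using assms finite_range_mixed_map by (metis finite_PiE finite_subset)
qed

lemma prod_le_prod_map: "prod_le Act p q \<Longrightarrow> prod_le Act (prod_map Act f p) (prod_map Act f q)"
  unfolding prod_le_def mixed_le_def prod_map_def mixed_map_def scott_closure_def up_def
  by auto blast+

definition char_formula :: "'a set \<Rightarrow> ('d::order \<Rightarrow> ('a \<Rightarrow> 'd set \<times> 'd set)) \<Rightarrow> 'a hml \<Rightarrow> 'd \<Rightarrow> bool" where
  "char_formula Act i \<chi> v \<longleftrightarrow> acts \<chi> \<subseteq> Act \<and> (\<forall>l. sat i May l \<chi> \<longleftrightarrow> v \<le> l)"

locale pd_solution =
  fixes Act :: "'a set" and i :: "'d::order \<Rightarrow> ('a \<Rightarrow> 'd set \<times> 'd set)"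
  assumes solution: "is_solution Act i"
begin

lemma le_iff_prod_le: "x \<le> y \<longleftrightarrow> prod_le Act (i x) (i y)"
  using solution unfolding is_solution_def by blast

lemma i_inv_eq: "p \<in> prod_pd Act \<Longrightarrow> i (inv i p) = p"
  using solution unfolding is_solution_def bij_betw_def by (metis f_inv_into_f)

lemma i_in_mixed_pd: "\<alpha> \<in> Act \<Longrightarrow> i x \<alpha> \<in> mixed_pd"
  using solution unfolding is_solution_def bij_betw_def prod_pd_def by auto

lemma le_imp_mixed_le: "x \<le> y \<Longrightarrow> \<alpha> \<in> Act \<Longrightarrow> fst (i x \<alpha>) \<subseteq> fst (i y \<alpha>) \<and> snd (i y \<alpha>) \<subseteq> snd (i x \<alpha>)"
  using le_iff_prod_le unfolding prod_le_def mixed_le_def by blast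

lemma sat_mono:
  assumes "acts \<phi> \<subseteq> Act" "x \<le> y"
  shows "(sat i May x \<phi> \<longrightarrow> sat i May y \<phi>) \<and> (sat i Must y \<phi> \<longrightarrow> sat i Must x \<phi>)"
  using assms
proof (induction \<phi> arbitrary: x y)
  case (Dia \<alpha> \<phi>)
  then have "\<alpha> \<in> Act" by simp
  with Dia show ?case using le_imp_mixed_le[OF Dia.prems(2) \<open>\<alpha> \<in> Act\<close>] by (auto simp: trans_def)
qed auto

lemma sat_May_imp_Must: "acts \<phi> \<subseteq> Act \<Longrightarrow> sat i May x \<phi> \<Longrightarrow> sat i Must x \<phi>"
proof (induction \<phi> arbitrary: x)
  case (Dia \<alpha> \<phi>)
  then obtain x' where "x' \<in> fst (i x \<alpha>)" "sat i May x' \<phi>" "\<alpha> \<in> Act"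
    by (auto simp: trans_def)
  moreover from \<open>\<alpha> \<in> Act\<close> have "fst (i x \<alpha>) = down (fst (i x \<alpha>) \<inter> snd (i x \<alpha>))"
    by (intro mixed_pd_lower_eq i_in_mixed_pd)
  ultimately obtain x'' where "x'' \<in> snd (i x \<alpha>)" "x' \<le> x''"
    unfolding down_def by blast
  with Dia sat_mono[of \<phi> x' x''] \<open>sat i May x' \<phi>\<close> show ?case by (auto simp: trans_def)
qed auto

lemma char_formula_prod_map:
  assumes "finite Act" "finite (range f)" and v: "i v = prod_map Act f p"
    and c: "\<And>x. char_formula Act i (c (f x)) (f x)"
  shows "\<exists>\<chi>. char_formula Act i \<chi> v"
proof -
  define \<phi> where "\<phi> \<alpha> = Conj (Big_Conj (Dia \<alpha> ` c ` f ` fst (p \<alpha>)))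
      (Neg (Dia \<alpha> (Big_Conj (Neg ` c ` f ` snd (p \<alpha>)))))" for \<alpha>
  have c_acts: "acts (c (f x)) \<subseteq> Act" and c_sat: "sat i May l (c (f x)) \<longleftrightarrow> f x \<le> l" for x l
    using c unfolding char_formula_def by auto
  have fin: "finite (c ` f ` A)" for A
    using \<open>finite (range f)\<close> by (meson finite_imageI finite_subset image_mono subset_UNIV)
  have acts: "acts (Big_Conj (\<phi> ` Act)) \<subseteq> Act"
    using \<open>finite Act\<close> fin
    by (auto simp: acts_Big_Conj \<phi>_def split: if_splits dest: c_acts[THEN subsetD])
  have lower: "sat i May l (Big_Conj (Dia \<alpha> ` c ` f ` A)) \<longleftrightarrow> scott_closure (f ` A) \<subseteq> fst (i l \<alpha>)"
    if "\<alpha> \<in> Act" for l \<alpha> A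
  proof -
    have "scott_closed (fst (i l \<alpha>))"
      using that by (intro mixed_pd_scott_closed i_in_mixed_pd)
    then show ?thesis
      using c_sat fin
      by (auto simp: sat_Big_Conj trans_def scott_closure_subset_iff
          intro: scott_closed_down_closed)
  qed
  have upper: "sat i May l (Neg (Dia \<alpha> (Big_Conj (Neg ` c ` f ` B)))) \<longleftrightarrow> snd (i l \<alpha>) \<subseteq> up (f ` B)"
    for l \<alpha> B
    using c_sat fin unfolding up_def by (auto simp: sat_Big_Conj trans_def)
  have "sat i May l (Big_Conj (\<phi> ` Act)) \<longleftrightarrow> prod_le Act (prod_map Act f p) (i l)" for l
    using \<open>finite Act\<close> lower upper
    by (simp add: sat_Big_Conj \<phi>_def prod_le_def mixed_le_def prod_map_def mixed_map_def)
  with acts v show ?thesis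
    unfolding char_formula_def le_iff_prod_le by metis
qed

end

locale initial_pd_solution =
  fixes Act :: "'a set" and i :: "'d::order \<Rightarrow> ('a \<Rightarrow> 'd set \<times> 'd set)"
  assumes initial: "is_initial_solution Act i"
begin

sublocale pd_solution
  using initial unfolding is_initial_solution_def by unfold_locales blast

lemma finite_Act: "finite Act"
  using initial unfolding is_initial_solution_def by blast

lemma algebraic: "algebraic TYPE('d)"
  using initial unfolding is_initial_solution_def bifinite_def by blast

lemma is_lub_approx: "is_lub (range (\<lambda>n. approx Act i n x)) x"
  using initial unfolding is_initial_solution_def by blast

text \<open>The least element is the one whose every component is \<open>({}, UNIV)\<close>.\<close>

lemma ex_least: "\<exists>b::'d. \<forall>x. b \<le> x"
proof -
  have "\<exists>k\<in>KD. k \<le> x" for x :: 'd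
    using algebraicD[OF algebraic, of x] unfolding directed_def by auto
  then have "({}, UNIV) \<in> (mixed_pd :: ('d set \<times> 'd set) set)"
    unfolding mixed_pd_def scott_closed_def scott_open_def lawson_closed_def upper_def
      up_def down_def
    by (auto intro: generate_topology.UNIV generate_topology.UN[of "{}", simplified])
  then have "i (inv i (\<lambda>\<alpha>\<in>Act. ({}, UNIV))) = (\<lambda>\<alpha>\<in>Act. ({}, UNIV))"
    by (intro i_inv_eq) (auto simp: prod_pd_def)
  then have "\<forall>x. inv i (\<lambda>\<alpha>\<in>Act. ({}, UNIV)) \<le> x"
    unfolding le_iff_prod_le prod_le_def mixed_le_def by auto
  then show ?thesis ..
qed

lemma i_inv_prod_map:
  assumes "mono f" "finite (range f)"
  shows "i (inv i (prod_map Act f (i x))) = prod_map Act f (i x)"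
proof -
  obtain b :: 'd where "\<forall>x. b \<le> x" using ex_least by blast
  then have "prod_map Act f (i x) \<in> prod_pd Act"
    using algebraic_mixed_map_in_mixed_pd[OF algebraic _ assms] i_in_mixed_pd
    unfolding prod_map_def prod_pd_def by auto
  then show ?thesis by (rule i_inv_eq)
qed

lemma mono_finite_range_approx: "mono (approx Act i n) \<and> finite (range (approx Act i n))"
proof (induction n)
  case 0
  then show ?case by (simp add: mono_def)
next
  case (Suc n)
  let ?f = "approx Act i n"
  have "mono (approx Act i (Suc n))"
  proof (rule monoI)
    fix x y :: 'd assume "x \<le> y"
    then have "prod_le Act (prod_map Act ?f (i x)) (prod_map Act ?f (i y))"
      using le_iff_prod_le prod_le_prod_map by blast
    then show "approx Act i (Suc n) x \<le> approx Act i (Suc n) y"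
      unfolding le_iff_prod_le using i_inv_prod_map Suc.IH by simp
  qed
  moreover have "range (approx Act i (Suc n)) \<subseteq> inv i ` range (prod_map Act ?f)"
    by auto
  then have "finite (range (approx Act i (Suc n)))"
    using finite_range_prod_map[OF finite_Act] Suc.IH by (meson finite_imageI finite_subset)
  ultimately show ?case ..
qed

lemma approx_char_formula: "\<exists>\<chi>. char_formula Act i \<chi> (approx Act i n z)"
proof (induction n arbitrary: z)
  case 0
  obtain b :: 'd where "\<forall>x. b \<le> x" using ex_least ..
  then have "char_formula Act i TT (approx Act i 0 z)"
    unfolding char_formula_def by (simp add: dbot_eqI)
  then show ?case ..
next
  case (Suc n)
  define c where "c v = (SOME \<chi>. char_formula Act i \<chi> v)" for v
  have c: "char_formula Act i (c (approx Act i n x)) (approx Act i n x)" for x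
    unfolding c_def using Suc.IH by (rule someI_ex)
  moreover have "i (approx Act i (Suc n) z) = prod_map Act (approx Act i n) (i z)"
    using i_inv_prod_map mono_finite_range_approx by simp
  ultimately show ?case
    using char_formula_prod_map[OF finite_Act] mono_finite_range_approx by blast
qed

lemma le_if_sat_May_subset:
  assumes "\<forall>\<phi>. acts \<phi> \<subseteq> Act \<longrightarrow> sat i May y \<phi> \<longrightarrow> sat i May x \<phi>"
  shows "y \<le> x"
proof -
  have "approx Act i n y \<le> x" for n
  proof -
    obtain \<chi> where \<chi>: "char_formula Act i \<chi> (approx Act i n y)"
      using approx_char_formula by blast
    have "approx Act i n y \<le> y" using is_lub_approx unfolding is_lub_def by blast
    with \<chi> assms show ?thesis unfolding char_formula_def by blast
  qed
  then show ?thesis using is_lub_approx unfolding is_lub_def by blast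
qed

end

theorem lemma3p13:
  fixes Act :: "'a set" and i :: "'d::order \<Rightarrow> ('a \<Rightarrow> 'd set \<times> 'd set)" and d :: 'd
  assumes "is_initial_solution Act i"
    and "\<forall>\<phi>. acts \<phi> \<subseteq> Act \<longrightarrow> sat i Must d \<phi> \<longrightarrow> sat i May d \<phi>"
  shows "maximal d"
proof -
  interpret initial_pd_solution Act i by unfold_locales (fact assms(1))
  show ?thesis unfolding maximal_def
  proof (intro allI impI)
    fix y assume "d \<le> y"
    have "sat i May d \<phi>" if "acts \<phi> \<subseteq> Act" "sat i May y \<phi>" for \<phi>
    proof -
      have "sat i Must y \<phi>" using sat_May_imp_Must that by blast
      then have "sat i Must d \<phi>" using sat_mono[OF that(1) \<open>d \<le> y\<close>] by blast
      then show ?thesis using assms(2) that(1) by blast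
    qed
    then have "y \<le> d" by (blast intro: le_if_sat_May_subset)
    with \<open>d \<le> y\<close> show "y = d" by simp
  qed
qed

end
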